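(* Let $(T_1,F_1)$ and $(T_2,F_2)$ be proper scoring rules such that $T_1,T_2,F_1,F_2$ are continuous at $0$ and at $1$. Then $(T_1-T_2,\,F_1-F_2)$ is a proper scoring rule if and only if either $T_1-T_2$ is non-decreasing or $F_1-F_2$ is non-increasing.
   Context: A pair of functions $(T,F)$ from $[0,1]$ to $[-\infty,\infty)$, finite on $(0,1)$, is a proper scoring rule if for all $p,q\in[0,1]$, $$pT(p)+(1-p)F(p)\ \ge\ pT(q)+(1-p)F(q),$$ with the convention $0\cdot(-\infty)=0$. *)

theory Defs
  imports "HOL-Analysis.Analysis"
begin

text \<open>A pair of functions (T,F) from [0,1] to [-infinity,infinity), finite on (0,1),
  satisfying the properness inequality for all p,q in [0,1].  In ereal, 0 * (-infinity) = 0.\<close>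
definition proper_scoring_rule :: "(real \<Rightarrow> ereal) \<Rightarrow> (real \<Rightarrow> ereal) \<Rightarrow> bool" where
  "proper_scoring_rule T F \<longleftrightarrow>
     (\<forall>p\<in>{0..1}. T p \<noteq> \<infinity> \<and> F p \<noteq> \<infinity>) \<and>
     (\<forall>p\<in>{0<..<1}. \<bar>T p\<bar> \<noteq> \<infinity> \<and> \<bar>F p\<bar> \<noteq> \<infinity>) \<and>
     (\<forall>p\<in>{0..1}. \<forall>q\<in>{0..1}.
        ereal p * T p + ereal (1 - p) * F p \<ge> ereal p * T q + ereal (1 - p) * F q)"

text \<open>Pointwise difference of two [-infinity,infinity)-valued functions on [0,1].
  Where both values are -infinity (possible only at the endpoints 0, 1) the difference
  is undefined pointwise; it is taken to be the limit of the difference from inside (0,1),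
  i.e. the continuous extension.\<close>
definition sr_diff :: "(real \<Rightarrow> ereal) \<Rightarrow> (real \<Rightarrow> ereal) \<Rightarrow> real \<Rightarrow> ereal" where
  "sr_diff T1 T2 p =
     (if T1 p = -\<infinity> \<and> T2 p = -\<infinity>
      then Lim (at p within {0<..<1}) (\<lambda>x. T1 x - T2 x)
      else T1 p - T2 p)"

end

theory Submission
  imports Defs
begin

(* With g = T - F, let d(p,q) = p (T p - T q) + (1 - p) (F p - F q) be the expected loss of
   reporting q under belief p. On (0,1) properness means d >= 0 and forces T and g to increase
   and F to decrease, with (1 - v) (g v - g u) <= T v - T u <= (1 - u) (g v - g u) for u <= v.
   For the difference D of two proper rules,
   d_D(w,u) = d_D(w,v) + d_D(v,u) + (w - v) (g_D v - g_D u), so d_D(w,u) is superadditive in the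
   interval [u,w] once g_D = g1 - g2 increases, while d_D(v,u) >= -d2(v,u) >= -(v - u) (g2 v - g2 u);
   summing over a uniform partition of mesh h gives d_D >= -h (g2 p - g2 q), hence d_D >= 0.
   The same partition argument with the bracket above turns an increasing T1 - T2 into an
   increasing g_D, and the condition on F1 - F2 is the mirror image under p |-> 1 - p, which
   swaps T and F. Monotone differences have limits at 0 and 1, which continuity identifies with
   the endpoint values of sr_diff, so properness and monotonicity pass from (0,1) to [0,1]. *)

definition score_divergence :: "(real \<Rightarrow> real) \<Rightarrow> (real \<Rightarrow> real) \<Rightarrow> real \<Rightarrow> real \<Rightarrow> real" where
  "score_divergence t f p q = p * (t p - t q) + (1 - p) * (f p - f q)"

definition proper_interior :: "(real \<Rightarrow> real) \<Rightarrow> (real \<Rightarrow> real) \<Rightarrow> bool" where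
  "proper_interior t f \<longleftrightarrow> (\<forall>p\<in>{0<..<1}. \<forall>q\<in>{0<..<1}. 0 \<le> score_divergence t f p q)"

lemma score_divergence_eq_gap:
  "score_divergence t f p q = (t p - t q) - (1 - p) * ((t p - f p) - (t q - f q))"
  unfolding score_divergence_def by (simp add: algebra_simps)

lemma score_divergence_chain:
  "score_divergence t f x q =
     score_divergence t f x m + score_divergence t f m q + (x - m) * ((t m - f m) - (t q - f q))"
  unfolding score_divergence_def by (simp add: algebra_simps)

lemma score_divergence_swap:
  "score_divergence t f x q + score_divergence t f q x = (x - q) * ((t x - f x) - (t q - f q))"
  unfolding score_divergence_def by (simp add: algebra_simps)

lemma score_divergence_diff:
  "score_divergence (\<lambda>x. t1 x - t2 x) (\<lambda>x. f1 x - f2 x) p q =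
     score_divergence t1 f1 p q - score_divergence t2 f2 p q"
  unfolding score_divergence_def by (simp add: algebra_simps)

lemma score_divergence_reflect:
  "score_divergence (\<lambda>x. f (1 - x)) (\<lambda>x. t (1 - x)) p q = score_divergence t f (1 - p) (1 - q)"
  unfolding score_divergence_def by (simp add: algebra_simps)

lemma proper_interior_cong:
  assumes "\<And>x. x \<in> {0<..<1} \<Longrightarrow> t x = t' x" and "\<And>x. x \<in> {0<..<1} \<Longrightarrow> f x = f' x"
  shows "proper_interior t f \<longleftrightarrow> proper_interior t' f'"
  using assms unfolding proper_interior_def score_divergence_def by simp

lemma proper_interior_reflect:
  assumes "proper_interior t f"
  shows "proper_interior (\<lambda>x. f (1 - x)) (\<lambda>x. t (1 - x))"
  using assms unfolding proper_interior_def score_divergence_reflect by simp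

lemma proper_interior_gap_mono:
  assumes "proper_interior t f"
  shows "mono_on {0<..<1} (\<lambda>x. t x - f x)"
proof (rule mono_onI)
  fix u v :: real assume uv: "u \<in> {0<..<1}" "v \<in> {0<..<1}" "u \<le> v"
  have "0 \<le> (v - u) * ((t v - f v) - (t u - f u))"
    using assms uv unfolding proper_interior_def score_divergence_swap[symmetric]
    by (simp add: add_nonneg_nonneg)
  then show "t u - f u \<le> t v - f v"
    using uv by (cases "u = v") (auto simp: zero_le_mult_iff)
qed

lemma proper_interior_mono:
  assumes "proper_interior t f"
  shows "mono_on {0<..<1} t" and "antimono_on {0<..<1} f"
proof -
  have bounds: "(1 - v) * ((t v - f v) - (t u - f u)) \<le> t v - t u"
    "t v - t u \<le> (1 - u) * ((t v - f v) - (t u - f u))"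
    "0 \<le> (t v - f v) - (t u - f u)"
    if "u \<in> {0<..<1}" "v \<in> {0<..<1}" "u \<le> v" for u v
    using assms that mono_onD[OF proper_interior_gap_mono[OF assms], of u v]
    unfolding proper_interior_def score_divergence_eq_gap by (auto simp: algebra_simps)
  show "mono_on {0<..<1} t"
  proof (rule mono_onI)
    fix u v :: real assume uv: "u \<in> {0<..<1}" "v \<in> {0<..<1}" "u \<le> v"
    have "0 \<le> (1 - v) * ((t v - f v) - (t u - f u))" using bounds(3)[OF uv] uv by simp
    then show "t u \<le> t v" using bounds(1)[OF uv] by linarith
  qed
  show "antimono_on {0<..<1} f"
  proof (rule monotone_onI)
    fix u v :: real assume uv: "u \<in> {0<..<1}" "v \<in> {0<..<1}" "u \<le> v"
    have "0 \<le> u * ((t v - f v) - (t u - f u))" using bounds(3)[OF uv] uv by simp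
    then show "f v \<le> f u" using bounds(2)[OF uv] by (simp add: algebra_simps)
  qed
qed

lemma superadditive_ge_uniform_partition:
  fixes \<phi> :: "real \<Rightarrow> real \<Rightarrow> real" and g :: "real \<Rightarrow> real" and n :: nat
  assumes "s \<le> t" and "0 < n"
    and superadd: "\<And>u v w. s \<le> u \<Longrightarrow> u \<le> v \<Longrightarrow> v \<le> w \<Longrightarrow> w \<le> t \<Longrightarrow> \<phi> u v + \<phi> v w \<le> \<phi> u w"
    and local: "\<And>u v. s \<le> u \<Longrightarrow> u \<le> v \<Longrightarrow> v \<le> t \<Longrightarrow> - ((v - u) * (g v - g u)) \<le> \<phi> u v"
  shows "- ((t - s) / n * (g t - g s)) \<le> \<phi> s t"
proof -
  define h where "h = (t - s) / n"
  define x where "x k = s + real k * h" for k :: nat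
  have "0 \<le> h" using assms by (simp add: h_def)
  have x_le: "x k \<le> t" if "k \<le> n" for k
  proof -
    have "real k * h \<le> real n * h" using that \<open>0 \<le> h\<close> by (simp add: mult_right_mono)
    then show ?thesis using \<open>0 < n\<close> by (simp add: x_def h_def)
  qed
  have x_ge: "s \<le> x k" and x_step: "x (Suc k) = x k + h" for k
    using \<open>0 \<le> h\<close> by (simp_all add: x_def algebra_simps)
  have "- (h * (g (x m) - g s)) \<le> \<phi> s (x m)" if "m \<le> n" for m
    using that
  proof (induction m)
    case 0
    then show ?case using local[of s s] \<open>s \<le> t\<close> by (simp add: x_def)
  next
    case (Suc m)
    have "x m \<le> x (Suc m)" "x (Suc m) \<le> t" using x_step \<open>0 \<le> h\<close> x_le[OF Suc.prems] by auto
    then have "\<phi> s (x m) + \<phi> (x m) (x (Suc m)) \<le> \<phi> s (x (Suc m))"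
      and "- (h * (g (x (Suc m)) - g (x m))) \<le> \<phi> (x m) (x (Suc m))"
      using superadd[of s "x m" "x (Suc m)"] local[of "x m" "x (Suc m)"] x_ge x_step by auto
    moreover have "- (h * (g (x m) - g s)) \<le> \<phi> s (x m)" using Suc by simp
    ultimately show ?case by (simp add: algebra_simps)
  qed
  moreover have "x n = t" using \<open>0 < n\<close> by (simp add: x_def h_def)
  ultimately show ?thesis by (metis h_def order_refl)
qed

lemma superadditive_nonneg:
  fixes \<phi> :: "real \<Rightarrow> real \<Rightarrow> real" and g :: "real \<Rightarrow> real"
  assumes "s \<le> t"
    and "\<And>u v w. s \<le> u \<Longrightarrow> u \<le> v \<Longrightarrow> v \<le> w \<Longrightarrow> w \<le> t \<Longrightarrow> \<phi> u v + \<phi> v w \<le> \<phi> u w"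
    and "\<And>u v. s \<le> u \<Longrightarrow> u \<le> v \<Longrightarrow> v \<le> t \<Longrightarrow> - ((v - u) * (g v - g u)) \<le> \<phi> u v"
  shows "0 \<le> \<phi> s t"
proof (rule LIMSEQ_le_const2)
  show "(\<lambda>n. - ((t - s) * (g t - g s) / real n)) \<longlonglongrightarrow> 0"
    using tendsto_minus[OF lim_const_over_n[of "(t - s) * (g t - g s)"]] by simp
  show "\<exists>N. \<forall>n\<ge>N. - ((t - s) * (g t - g s) / real n) \<le> \<phi> s t"
    using superadditive_ge_uniform_partition[OF assms(1) _ assms(2,3)] by (intro exI[of _ 1]) auto
qed

lemma score_divergence_diff_nonneg_if_mono_gap:
  assumes r1: "proper_interior t1 f1" and r2: "proper_interior t2 f2"
    and gap: "mono_on {0<..<1} (\<lambda>x. (t1 x - f1 x) - (t2 x - f2 x))"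
    and pq: "q \<in> {0<..<1}" "p \<in> {0<..<1}" "q \<le> p"
  shows "0 \<le> score_divergence (\<lambda>x. t1 x - t2 x) (\<lambda>x. f1 x - f2 x) p q"
proof -
  let ?d = "score_divergence (\<lambda>x. t1 x - t2 x) (\<lambda>x. f1 x - f2 x)"
  have "0 \<le> (\<lambda>u w. ?d w u) q p"
  proof (rule superadditive_nonneg[where \<phi> = "\<lambda>u w. ?d w u" and g = "\<lambda>x. t2 x - f2 x"])
    show "q \<le> p" using pq by simp
  next
    fix u v w assume "q \<le> u" "u \<le> v" "v \<le> w" "w \<le> p"
    then have "0 \<le> (w - v) * ((t1 v - f1 v - (t2 v - f2 v)) - (t1 u - f1 u - (t2 u - f2 u)))"
      using mono_onD[OF gap, of u v] pq by simp
    then show "?d v u + ?d w v \<le> ?d w u"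
      using score_divergence_chain[of "\<lambda>x. t1 x - t2 x" "\<lambda>x. f1 x - f2 x" w u v]
      by (simp add: algebra_simps)
  next
    fix u v assume "q \<le> u" "u \<le> v" "v \<le> p"
    then have "u \<in> {0<..<1}" "v \<in> {0<..<1}" using pq by auto
    then have "0 \<le> score_divergence t1 f1 v u" "0 \<le> score_divergence t2 f2 u v"
      using r1 r2 unfolding proper_interior_def by auto
    then show "- ((v - u) * ((t2 v - f2 v) - (t2 u - f2 u))) \<le> ?d v u"
      unfolding score_divergence_diff score_divergence_swap[symmetric] by simp
  qed
  then show ?thesis by simp
qed

lemma proper_interior_diff_if_mono_gap:
  assumes r1: "proper_interior t1 f1" and r2: "proper_interior t2 f2"
    and gap: "mono_on {0<..<1} (\<lambda>x. (t1 x - f1 x) - (t2 x - f2 x))"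
  shows "proper_interior (\<lambda>x. t1 x - t2 x) (\<lambda>x. f1 x - f2 x)"
  unfolding proper_interior_def
proof (intro ballI)
  fix p q :: real assume p: "p \<in> {0<..<1}" and q: "q \<in> {0<..<1}"
  show "0 \<le> score_divergence (\<lambda>x. t1 x - t2 x) (\<lambda>x. f1 x - f2 x) p q"
  proof (cases "q \<le> p")
    case True
    then show ?thesis using score_divergence_diff_nonneg_if_mono_gap[OF r1 r2 gap q p] by simp
  next
    case False
    have gap': "mono_on {0<..<1} (\<lambda>x. (f1 (1 - x) - t1 (1 - x)) - (f2 (1 - x) - t2 (1 - x)))"
    proof (rule mono_onI)
      fix u v :: real assume "u \<in> {0<..<1}" "v \<in> {0<..<1}" "u \<le> v"
      then show "(f1 (1 - u) - t1 (1 - u)) - (f2 (1 - u) - t2 (1 - u))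
          \<le> (f1 (1 - v) - t1 (1 - v)) - (f2 (1 - v) - t2 (1 - v))"
        using mono_onD[OF gap, of "1 - v" "1 - u"] by simp
    qed
    have "0 \<le> score_divergence (\<lambda>x. f1 (1 - x) - f2 (1 - x)) (\<lambda>x. t1 (1 - x) - t2 (1 - x)) (1 - p) (1 - q)"
      by (rule score_divergence_diff_nonneg_if_mono_gap
          [OF proper_interior_reflect[OF r1] proper_interior_reflect[OF r2] gap'])
        (use p q False in auto)
    then show ?thesis
      using score_divergence_reflect[of "\<lambda>x. f1 x - f2 x" "\<lambda>x. t1 x - t2 x" "1 - p" "1 - q"] by simp
  qed
qed

lemma mono_gap_diff_if_mono_diff:
  assumes r1: "proper_interior t1 f1" and r2: "proper_interior t2 f2"
    and mono: "mono_on {0<..<1} (\<lambda>x. t1 x - t2 x)"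
  shows "mono_on {0<..<1} (\<lambda>x. (t1 x - f1 x) - (t2 x - f2 x))"
proof (rule mono_onI)
  fix q p :: real assume q: "q \<in> {0<..<1}" and p: "p \<in> {0<..<1}" and "q \<le> p"
  define g1 where "g1 x = t1 x - f1 x" for x
  define g2 where "g2 x = t2 x - f2 x" for x
  have "0 \<le> (\<lambda>u v. (1 - p) * ((g1 v - g1 u) - (g2 v - g2 u))) q p"
  proof (rule superadditive_nonneg[where \<phi> = "\<lambda>u v. (1 - p) * ((g1 v - g1 u) - (g2 v - g2 u))"
        and g = g2])
    show "q \<le> p" by fact
  next
    fix u v assume uv: "q \<le> u" "u \<le> v" "v \<le> p"
    then have I: "u \<in> {0<..<1}" "v \<in> {0<..<1}" using p q by auto
    have "t1 v - t1 u \<le> (1 - u) * (g1 v - g1 u)" "(1 - v) * (g2 v - g2 u) \<le> t2 v - t2 u"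
      using r1 r2 I unfolding proper_interior_def score_divergence_eq_gap g1_def g2_def
      by (auto simp: algebra_simps)
    moreover have "t2 v - t2 u \<le> t1 v - t1 u" using mono_onD[OF mono I \<open>u \<le> v\<close>] by simp
    ultimately have key: "- ((v - u) * (g2 v - g2 u)) \<le> (1 - u) * ((g1 v - g1 u) - (g2 v - g2 u))"
      by (simp add: algebra_simps)
    have "0 \<le> g2 v - g2 u" using mono_onD[OF proper_interior_gap_mono[OF r2] I \<open>u \<le> v\<close>] by (simp add: g2_def)
    \<comment> \<open>the left-hand side is nonpositive, so \<open>1 - u\<close> may shrink to \<open>1 - p\<close>\<close>
    show "- ((v - u) * (g2 v - g2 u)) \<le> (1 - p) * ((g1 v - g1 u) - (g2 v - g2 u))"
    proof (cases "0 \<le> (g1 v - g1 u) - (g2 v - g2 u)")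
      case True
      moreover have "0 \<le> (v - u) * (g2 v - g2 u)" using \<open>0 \<le> g2 v - g2 u\<close> uv by simp
      moreover have "0 \<le> (1 - p) * ((g1 v - g1 u) - (g2 v - g2 u))" using True p by simp
      ultimately show ?thesis by linarith
    next
      case False
      then show ?thesis using key uv by (smt (verit) mult_right_mono_neg)
    qed
  qed (simp_all add: algebra_simps)
  then show "t1 q - f1 q - (t2 q - f2 q) \<le> t1 p - f1 p - (t2 p - f2 p)"
    using p by (simp add: g1_def g2_def zero_le_mult_iff)
qed

lemma proper_interior_diff_iff:
  assumes r1: "proper_interior t1 f1" and r2: "proper_interior t2 f2"
  shows "proper_interior (\<lambda>x. t1 x - t2 x) (\<lambda>x. f1 x - f2 x) \<longleftrightarrow> mono_on {0<..<1} (\<lambda>x. t1 x - t2 x)"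
    and "proper_interior (\<lambda>x. t1 x - t2 x) (\<lambda>x. f1 x - f2 x) \<longleftrightarrow> antimono_on {0<..<1} (\<lambda>x. f1 x - f2 x)"
proof -
  have if_mono: "proper_interior (\<lambda>x. t1 x - t2 x) (\<lambda>x. f1 x - f2 x)"
    if mono: "mono_on {0<..<1} (\<lambda>x. t1 x - t2 x)"
      and r1: "proper_interior t1 f1" and r2: "proper_interior t2 f2"
    for t1 f1 t2 f2 :: "real \<Rightarrow> real"
    using proper_interior_diff_if_mono_gap[OF r1 r2 mono_gap_diff_if_mono_diff[OF r1 r2 mono]] .
  have if_antimono: "proper_interior (\<lambda>x. t1 x - t2 x) (\<lambda>x. f1 x - f2 x)"
    if "antimono_on {0<..<1} (\<lambda>x. f1 x - f2 x)"
  proof -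
    have "mono_on {0<..<1} (\<lambda>x. f1 (1 - x) - f2 (1 - x))"
    proof (rule mono_onI)
      fix u v :: real assume "u \<in> {0<..<1}" "v \<in> {0<..<1}" "u \<le> v"
      then show "f1 (1 - u) - f2 (1 - u) \<le> f1 (1 - v) - f2 (1 - v)"
        using monotone_onD[OF that, of "1 - v" "1 - u"] by simp
    qed
    then have "proper_interior (\<lambda>x. f1 (1 - x) - f2 (1 - x)) (\<lambda>x. t1 (1 - x) - t2 (1 - x))"
      by (rule if_mono[OF _ proper_interior_reflect[OF r1] proper_interior_reflect[OF r2]])
    from proper_interior_reflect[OF this] show ?thesis by simp
  qed
  show "proper_interior (\<lambda>x. t1 x - t2 x) (\<lambda>x. f1 x - f2 x) \<longleftrightarrow> mono_on {0<..<1} (\<lambda>x. t1 x - t2 x)"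
    and "proper_interior (\<lambda>x. t1 x - t2 x) (\<lambda>x. f1 x - f2 x) \<longleftrightarrow> antimono_on {0<..<1} (\<lambda>x. f1 x - f2 x)"
    using proper_interior_mono if_mono[OF _ r1 r2] if_antimono by blast+
qed

lemma mono_on_tendsto_INF_at_left:
  fixes h :: "real \<Rightarrow> 'a::{complete_linorder, linorder_topology}"
  assumes "mono_on {a<..<b} h"
  shows "(h \<longlongrightarrow> (INF x\<in>{a<..<b}. h x)) (at a within {a<..<b})"
proof (rule order_tendstoI)
  fix y assume "y < (INF x\<in>{a<..<b}. h x)"
  then show "eventually (\<lambda>x. y < h x) (at a within {a<..<b})"
    by (auto simp: eventually_at_filter less_INF_D intro!: always_eventually)
next
  fix y assume "(INF x\<in>{a<..<b}. h x) < y"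
  then obtain z where z: "z \<in> {a<..<b}" "h z < y" by (auto simp: INF_less_iff)
  show "eventually (\<lambda>x. h x < y) (at a within {a<..<b})"
    unfolding eventually_at
  proof (intro exI[of _ "z - a"] conjI ballI impI)
    fix x assume "x \<in> {a<..<b}" "x \<noteq> a \<and> dist x a < z - a"
    then have "h x \<le> h z" using mono_onD[OF assms, of x z] z by (auto simp: dist_real_def)
    then show "h x < y" using z by simp
  qed (use z in simp)
qed

lemma mono_on_tendsto_SUP_at_right:
  fixes h :: "real \<Rightarrow> 'a::{complete_linorder, linorder_topology}"
  assumes "mono_on {a<..<b} h"
  shows "(h \<longlongrightarrow> (SUP x\<in>{a<..<b}. h x)) (at b within {a<..<b})"
proof (rule order_tendstoI)
  fix y assume "(SUP x\<in>{a<..<b}. h x) < y"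
  then show "eventually (\<lambda>x. h x < y) (at b within {a<..<b})"
    by (auto simp: eventually_at_filter intro!: always_eventually dest: SUP_lessD)
next
  fix y assume "y < (SUP x\<in>{a<..<b}. h x)"
  then obtain z where z: "z \<in> {a<..<b}" "y < h z" by (auto simp: less_SUP_iff)
  show "eventually (\<lambda>x. y < h x) (at b within {a<..<b})"
    unfolding eventually_at
  proof (intro exI[of _ "b - z"] conjI ballI impI)
    fix x assume "x \<in> {a<..<b}" "x \<noteq> b \<and> dist x b < b - z"
    then have "h z \<le> h x" using mono_onD[OF assms, of z x] z by (auto simp: dist_real_def)
    then show "y < h x" using z by simp
  qed (use z in simp)
qed

lemma monotone_ereal_tendsto_endpoint:
  fixes h :: "real \<Rightarrow> ereal"
  assumes "mono_on {a<..<b} h \<or> antimono_on {a<..<b} h" and "c \<in> {a, b}"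
  shows "\<exists>L. (h \<longlongrightarrow> L) (at c within {a<..<b})"
proof -
  have mono_lim: "\<exists>L. (g \<longlongrightarrow> L) (at c within {a<..<b})" if "mono_on {a<..<b} g" for g :: "real \<Rightarrow> ereal"
    using mono_on_tendsto_INF_at_left[OF that] mono_on_tendsto_SUP_at_right[OF that] \<open>c \<in> {a, b}\<close>
    by blast
  show ?thesis
  proof (cases "mono_on {a<..<b} h")
    case True
    then show ?thesis by (rule mono_lim)
  next
    case False
    then have "mono_on {a<..<b} (\<lambda>x. - h x)"
      using assms(1) by (auto simp: monotone_on_def)
    then obtain L where "((\<lambda>x. - h x) \<longlongrightarrow> L) (at c within {a<..<b})" using mono_lim by blast
    then have "(h \<longlongrightarrow> - L) (at c within {a<..<b})" using ereal_Lim_uminus by fastforce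
    then show ?thesis by blast
  qed
qed

lemma mono_on_closed_if_tendsto_endpoints:
  fixes h :: "real \<Rightarrow> 'a::linorder_topology"
  assumes "a < b" and mono: "mono_on {a<..<b} h"
    and lim_a: "(h \<longlongrightarrow> h a) (at a within {a<..<b})"
    and lim_b: "(h \<longlongrightarrow> h b) (at b within {a<..<b})"
  shows "mono_on {a..b} h"
proof -
  have nontriv: "\<not> trivial_limit (at a within {a<..<b})" "\<not> trivial_limit (at b within {a<..<b})"
    using \<open>a < b\<close> by (simp_all add: trivial_limit_within islimpt_greaterThanLessThan1 islimpt_greaterThanLessThan2)
  have lower: "h a \<le> h x" if x: "x \<in> {a<..<b}" for x
  proof (rule tendsto_upperbound[OF lim_a _ nontriv(1)])
    show "eventually (\<lambda>y. h y \<le> h x) (at a within {a<..<b})"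
      unfolding eventually_at
      by (intro exI[of _ "x - a"]) (use x in \<open>auto simp: dist_real_def intro!: mono_onD[OF mono]\<close>)
  qed
  have upper: "h x \<le> h b" if x: "x \<in> {a<..<b}" for x
  proof (rule tendsto_lowerbound[OF lim_b _ nontriv(2)])
    show "eventually (\<lambda>y. h x \<le> h y) (at b within {a<..<b})"
      unfolding eventually_at
      by (intro exI[of _ "b - x"]) (use x in \<open>auto simp: dist_real_def intro!: mono_onD[OF mono]\<close>)
  qed
  have "h a \<le> h b"
    using lower[of "(a + b) / 2"] upper[of "(a + b) / 2"] \<open>a < b\<close> by simp
  show ?thesis
  proof (rule mono_onI)
    fix u v assume "u \<in> {a..b}" "v \<in> {a..b}" "u \<le> v"
    then consider "u = v" | "u = a" "v = b" | "u = a" "v \<in> {a<..<b}" | "u \<in> {a<..<b}" "v = b"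
      | "u \<in> {a<..<b}" "v \<in> {a<..<b}"
      by fastforce
    then show "h u \<le> h v"
      by cases (use \<open>h a \<le> h b\<close> lower upper mono_onD[OF mono] \<open>u \<le> v\<close> in auto)
  qed
qed

definition regular_score :: "(real \<Rightarrow> ereal) \<Rightarrow> bool" where
  "regular_score A \<longleftrightarrow>
     (\<forall>x\<in>{0..1}. A x \<noteq> \<infinity>) \<and> (\<forall>x\<in>{0<..<1}. \<bar>A x\<bar> \<noteq> \<infinity>) \<and>
     continuous (at 0 within {0..1}) A \<and> continuous (at 1 within {0..1}) A"

lemma sr_diff_interior:
  assumes "regular_score A" "regular_score B" "x \<in> {0<..<1}"
  shows "sr_diff A B x = ereal (real_of_ereal (A x) - real_of_ereal (B x))"
proof -
  have "\<bar>A x\<bar> \<noteq> \<infinity>" "\<bar>B x\<bar> \<noteq> \<infinity>" using assms unfolding regular_score_def by auto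
  then show ?thesis by (cases "A x"; cases "B x") (auto simp: sr_diff_def)
qed

lemma sr_diff_endpoint_eq_limit:
  assumes A: "regular_score A" and B: "regular_score B" and c: "c \<in> {0, 1}"
    and L: "(sr_diff A B \<longlongrightarrow> L) (at c within {0<..<1})"
  shows "sr_diff A B c = L"
proof -
  have nontriv: "\<not> trivial_limit (at c within {0<..<1})"
    using c by (auto simp: trivial_limit_within islimpt_greaterThanLessThan1 islimpt_greaterThanLessThan2)
  have "A x - B x = sr_diff A B x" if "x \<in> {0<..<1}" for x
  proof -
    have "\<bar>A x\<bar> \<noteq> \<infinity>" using A that unfolding regular_score_def by auto
    then show ?thesis by (auto simp: sr_diff_def)
  qed
  then have "eventually (\<lambda>x. A x - B x = sr_diff A B x) (at c within {0<..<1})"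
    unfolding eventually_at_filter by (intro always_eventually) auto
  then have lim_diff: "((\<lambda>x. A x - B x) \<longlongrightarrow> L) (at c within {0<..<1})"
    using L by (rule tendsto_cong[THEN iffD2])
  show ?thesis
  proof (cases "A c = -\<infinity> \<and> B c = -\<infinity>")
    case True
    then show ?thesis unfolding sr_diff_def using tendsto_Lim[OF nontriv lim_diff] by simp
  next
    case False
    have "(A \<longlongrightarrow> A c) (at c within {0<..<1})" "(B \<longlongrightarrow> B c) (at c within {0<..<1})"
      using A B c unfolding regular_score_def continuous_within
      by (auto elim!: tendsto_within_subset)
    moreover have "A c \<noteq> \<infinity>" "B c \<noteq> \<infinity>" using A B c unfolding regular_score_def by auto
    ultimately have "((\<lambda>x. A x + - B x) \<longlongrightarrow> A c + - B c) (at c within {0<..<1})"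
      using False by (intro tendsto_add_ereal_general) (auto simp: ereal_uminus_eq_reorder)
    then have "A c - B c = L"
      using tendsto_unique[OF nontriv _ lim_diff] by (simp add: minus_ereal_def)
    then show ?thesis using False unfolding sr_diff_def by auto
  qed
qed

lemma sr_diff_tendsto_endpoint:
  assumes "regular_score A" "regular_score B"
    and "mono_on {0<..<1} (sr_diff A B) \<or> antimono_on {0<..<1} (sr_diff A B)" and "c \<in> {0, 1}"
  shows "(sr_diff A B \<longlongrightarrow> sr_diff A B c) (at c within {0<..<1})"
  using monotone_ereal_tendsto_endpoint[OF assms(3,4)] sr_diff_endpoint_eq_limit[OF assms(1,2,4)]
  by blast

lemma mono_on_sr_diff_iff:
  assumes "regular_score A" "regular_score B"
  shows "mono_on {0..1} (sr_diff A B) \<longleftrightarrow>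
    mono_on {0<..<1} (\<lambda>x. real_of_ereal (A x) - real_of_ereal (B x))"
proof -
  have interior: "mono_on {0<..<1} (sr_diff A B) \<longleftrightarrow>
      mono_on {0<..<1} (\<lambda>x. real_of_ereal (A x) - real_of_ereal (B x))"
    by (simp add: monotone_on_def sr_diff_interior[OF assms])
  show ?thesis
  proof
    assume "mono_on {0..1} (sr_diff A B)"
    then show "mono_on {0<..<1} (\<lambda>x. real_of_ereal (A x) - real_of_ereal (B x))"
      unfolding interior[symmetric] by (rule mono_on_subset) auto
  next
    assume "mono_on {0<..<1} (\<lambda>x. real_of_ereal (A x) - real_of_ereal (B x))"
    then have "mono_on {0<..<1} (sr_diff A B)" using interior by blast
    then show "mono_on {0..1} (sr_diff A B)"
      using sr_diff_tendsto_endpoint[OF assms] by (intro mono_on_closed_if_tendsto_endpoints) auto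
  qed
qed

lemma antimono_on_sr_diff_iff:
  assumes "regular_score A" "regular_score B"
  shows "antimono_on {0..1} (sr_diff A B) \<longleftrightarrow>
    antimono_on {0<..<1} (\<lambda>x. real_of_ereal (A x) - real_of_ereal (B x))"
proof -
  have interior: "antimono_on {0<..<1} (sr_diff A B) \<longleftrightarrow>
      antimono_on {0<..<1} (\<lambda>x. real_of_ereal (A x) - real_of_ereal (B x))"
    by (simp add: monotone_on_def sr_diff_interior[OF assms])
  show ?thesis
  proof
    assume "antimono_on {0..1} (sr_diff A B)"
    then show "antimono_on {0<..<1} (\<lambda>x. real_of_ereal (A x) - real_of_ereal (B x))"
      unfolding interior[symmetric] by (rule monotone_on_subset) auto
  next
    assume "antimono_on {0<..<1} (\<lambda>x. real_of_ereal (A x) - real_of_ereal (B x))"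
    then have anti: "antimono_on {0<..<1} (sr_diff A B)" using interior by blast
    then have "mono_on {0<..<1} (\<lambda>x. - sr_diff A B x)" by (simp add: monotone_on_def)
    moreover have "((\<lambda>x. - sr_diff A B x) \<longlongrightarrow> - sr_diff A B c) (at c within {0<..<1})"
      if "c \<in> {0, 1}" for c
      using sr_diff_tendsto_endpoint[OF assms _ that] anti by blast
    ultimately have "mono_on {0..1} (\<lambda>x. - sr_diff A B x)"
      by (intro mono_on_closed_if_tendsto_endpoints) auto
    then show "antimono_on {0..1} (sr_diff A B)" by (simp add: monotone_on_def)
  qed
qed

lemma proper_interior_real_of_ereal_iff:
  fixes T F :: "real \<Rightarrow> ereal"
  assumes "\<And>x. x \<in> {0<..<1} \<Longrightarrow> \<bar>T x\<bar> \<noteq> \<infinity> \<and> \<bar>F x\<bar> \<noteq> \<infinity>"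
  shows "proper_interior (\<lambda>x. real_of_ereal (T x)) (\<lambda>x. real_of_ereal (F x)) \<longleftrightarrow>
    (\<forall>p\<in>{0<..<1}. \<forall>q\<in>{0<..<1}.
       ereal p * T q + ereal (1 - p) * F q \<le> ereal p * T p + ereal (1 - p) * F p)"
proof -
  have "0 \<le> score_divergence (\<lambda>x. real_of_ereal (T x)) (\<lambda>x. real_of_ereal (F x)) p q \<longleftrightarrow>
      ereal p * T q + ereal (1 - p) * F q \<le> ereal p * T p + ereal (1 - p) * F p"
    if "p \<in> {0<..<1}" "q \<in> {0<..<1}" for p q
    using assms[OF that(1)] assms[OF that(2)] unfolding score_divergence_def
    by (cases "T p"; cases "F p"; cases "T q"; cases "F q") (auto simp: algebra_simps)
  then show ?thesis unfolding proper_interior_def by blast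
qed

lemma proper_interior_if_proper_scoring_rule:
  assumes "proper_scoring_rule T F"
  shows "proper_interior (\<lambda>x. real_of_ereal (T x)) (\<lambda>x. real_of_ereal (F x))"
proof -
  have fin: "\<bar>T x\<bar> \<noteq> \<infinity> \<and> \<bar>F x\<bar> \<noteq> \<infinity>" if "x \<in> {0<..<1}" for x
    using assms that unfolding proper_scoring_rule_def by auto
  have "\<forall>p\<in>{0<..<1}. \<forall>q\<in>{0<..<1}.
      ereal p * T q + ereal (1 - p) * F q \<le> ereal p * T p + ereal (1 - p) * F p"
    using assms unfolding proper_scoring_rule_def by (simp add: subset_eq)
  then show ?thesis using proper_interior_real_of_ereal_iff[of T F, OF fin] by blast
qed

lemma proper_scoring_rule_endpoints_not_MInf:
  assumes "proper_scoring_rule T F"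
  shows "T 1 \<noteq> -\<infinity>" and "F 0 \<noteq> -\<infinity>"
proof -
  have score: "ereal p * T q + ereal (1 - p) * F q \<le> ereal p * T p + ereal (1 - p) * F p"
    if "p \<in> {0..1}" "q \<in> {0..1}" for p q
    using assms that unfolding proper_scoring_rule_def by blast
  have "T (1/2) \<le> T 1" "F (1/2) \<le> F 0"
    using score[of 1 "1/2"] score[of 0 "1/2"] by (simp_all add: zero_ereal_def[symmetric])
  moreover have "\<bar>T (1/2)\<bar> \<noteq> \<infinity>" "\<bar>F (1/2)\<bar> \<noteq> \<infinity>"
    using assms unfolding proper_scoring_rule_def by auto
  ultimately show "T 1 \<noteq> -\<infinity>" and "F 0 \<noteq> -\<infinity>" by auto
qed

lemma proper_scoring_rule_if_proper_interior:
  fixes T F :: "real \<Rightarrow> ereal"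
  assumes fin: "\<And>x. x \<in> {0<..<1} \<Longrightarrow> \<bar>T x\<bar> \<noteq> \<infinity> \<and> \<bar>F x\<bar> \<noteq> \<infinity>"
    and "T 1 \<noteq> \<infinity>" "F 0 \<noteq> \<infinity>"
    and interior: "proper_interior (\<lambda>x. real_of_ereal (T x)) (\<lambda>x. real_of_ereal (F x))"
    and mono: "mono_on {0..1} T" and antimono: "antimono_on {0..1} F"
    and lim: "\<And>c. c \<in> {0, 1} \<Longrightarrow>
      (T \<longlongrightarrow> T c) (at c within {0<..<1}) \<and> (F \<longlongrightarrow> F c) (at c within {0<..<1})"
  shows "proper_scoring_rule T F"
proof -
  define S where "S p q = ereal p * T q + ereal (1 - p) * F q" for p q
  have not_PInf: "T x \<noteq> \<infinity> \<and> F x \<noteq> \<infinity>" if "x \<in> {0..1}" for x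
  proof -
    have "T 0 \<le> T (1/2)" "F 1 \<le> F (1/2)" using mono_onD[OF mono] monotone_onD[OF antimono] by auto
    then show ?thesis using that fin[of x] fin[of "1/2"] assms(2,3) by (cases "x = 0 \<or> x = 1") auto
  qed
  have interior_S: "S p q \<le> S p p" if "p \<in> {0<..<1}" "q \<in> {0<..<1}" for p q
    using proper_interior_real_of_ereal_iff[of T F, OF fin] interior that unfolding S_def by blast
  have "S p q \<le> S p p" if p: "p \<in> {0..1}" and q: "q \<in> {0..1}" for p q
  proof -
    consider "p = 0" | "p = 1" | "p \<in> {0<..<1}" using p by fastforce
    then show ?thesis
    proof cases
      case 1
      then show ?thesis using monotone_onD[OF antimono, of 0 q] q by (simp add: S_def zero_ereal_def[symmetric])
    next
      case 2
      then show ?thesis using mono_onD[OF mono, of q 1] q by (simp add: S_def zero_ereal_def[symmetric])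
    next
      case p_interior: 3
      consider "q \<in> {0<..<1}" | "q \<in> {0, 1}" using q by fastforce
      then show ?thesis
      proof cases
        case 1
        then show ?thesis using interior_S p_interior by blast
      next
        case q_end: 2
        have "((\<lambda>x. S p x) \<longlongrightarrow> S p q) (at q within {0<..<1})"
          unfolding S_def using lim[OF q_end] not_PInf[OF q] p_interior
          by (intro tendsto_add_ereal_general tendsto_cmult_ereal) auto
        moreover have "eventually (\<lambda>x. S p x \<le> S p p) (at q within {0<..<1})"
          unfolding eventually_at_filter using interior_S p_interior by (intro always_eventually) auto
        moreover have "\<not> trivial_limit (at q within {0<..<1})"
          using q_end by (auto simp: trivial_limit_within islimpt_greaterThanLessThan1 islimpt_greaterThanLessThan2)
        ultimately show ?thesis by (rule tendsto_upperbound)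
      qed
    qed
  qed
  then show ?thesis using fin not_PInf unfolding proper_scoring_rule_def S_def by auto
qed

lemma proper_scoring_rule_sr_diff_iff:
  assumes P1: "proper_scoring_rule T1 F1" and P2: "proper_scoring_rule T2 F2"
    and reg: "regular_score T1" "regular_score T2" "regular_score F1" "regular_score F2"
  shows "proper_scoring_rule (sr_diff T1 T2) (sr_diff F1 F2) \<longleftrightarrow>
    proper_interior (\<lambda>x. real_of_ereal (T1 x) - real_of_ereal (T2 x))
      (\<lambda>x. real_of_ereal (F1 x) - real_of_ereal (F2 x))"
    (is "_ \<longleftrightarrow> proper_interior ?t ?f")
proof -
  have interior: "proper_interior (\<lambda>x. real_of_ereal (sr_diff T1 T2 x)) (\<lambda>x. real_of_ereal (sr_diff F1 F2 x))
      \<longleftrightarrow> proper_interior ?t ?f"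
    by (rule proper_interior_cong) (simp_all add: sr_diff_interior reg)
  have "proper_scoring_rule (sr_diff T1 T2) (sr_diff F1 F2)" if IP: "proper_interior ?t ?f"
  proof (rule proper_scoring_rule_if_proper_interior)
    show mono: "mono_on {0..1} (sr_diff T1 T2)" and anti: "antimono_on {0..1} (sr_diff F1 F2)"
      using proper_interior_mono[OF IP] mono_on_sr_diff_iff[OF reg(1,2)] antimono_on_sr_diff_iff[OF reg(3,4)]
      by blast+
    have "mono_on {0<..<1} (sr_diff T1 T2)" "antimono_on {0<..<1} (sr_diff F1 F2)"
      by (auto intro: monotone_on_subset[OF mono] monotone_on_subset[OF anti])
    then show "(sr_diff T1 T2 \<longlongrightarrow> sr_diff T1 T2 c) (at c within {0<..<1}) \<and>
        (sr_diff F1 F2 \<longlongrightarrow> sr_diff F1 F2 c) (at c within {0<..<1})" if "c \<in> {0, 1}" for c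
      using sr_diff_tendsto_endpoint[OF reg(1,2) _ that] sr_diff_tendsto_endpoint[OF reg(3,4) _ that]
      by blast
    have "\<bar>T1 1\<bar> \<noteq> \<infinity>" "\<bar>T2 1\<bar> \<noteq> \<infinity>" "\<bar>F1 0\<bar> \<noteq> \<infinity>" "\<bar>F2 0\<bar> \<noteq> \<infinity>"
      using reg proper_scoring_rule_endpoints_not_MInf[OF P1] proper_scoring_rule_endpoints_not_MInf[OF P2]
      unfolding regular_score_def by auto
    then show "sr_diff T1 T2 1 \<noteq> \<infinity>" "sr_diff F1 F2 0 \<noteq> \<infinity>"
      unfolding sr_diff_def by auto
    show "proper_interior (\<lambda>x. real_of_ereal (sr_diff T1 T2 x)) (\<lambda>x. real_of_ereal (sr_diff F1 F2 x))"
      using IP interior by blast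
  qed (simp add: sr_diff_interior reg)
  then show ?thesis using proper_interior_if_proper_scoring_rule interior by blast
qed

theorem corollary4:
  fixes T1 F1 T2 F2 :: "real \<Rightarrow> ereal"
  assumes "proper_scoring_rule T1 F1" and "proper_scoring_rule T2 F2"
    and "continuous (at 0 within {0..1}) T1" and "continuous (at 1 within {0..1}) T1"
    and "continuous (at 0 within {0..1}) T2" and "continuous (at 1 within {0..1}) T2"
    and "continuous (at 0 within {0..1}) F1" and "continuous (at 1 within {0..1}) F1"
    and "continuous (at 0 within {0..1}) F2" and "continuous (at 1 within {0..1}) F2"
  shows "proper_scoring_rule (sr_diff T1 T2) (sr_diff F1 F2) \<longleftrightarrow>
         (mono_on {0..1} (sr_diff T1 T2) \<or> antimono_on {0..1} (sr_diff F1 F2))"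
proof -
  have reg: "regular_score T1" "regular_score T2" "regular_score F1" "regular_score F2"
    using assms unfolding regular_score_def proper_scoring_rule_def by auto
  show ?thesis
    unfolding proper_scoring_rule_sr_diff_iff[OF assms(1,2) reg]
      mono_on_sr_diff_iff[OF reg(1,2)] antimono_on_sr_diff_iff[OF reg(3,4)]
    using proper_interior_diff_iff[OF proper_interior_if_proper_scoring_rule[OF assms(1)]
        proper_interior_if_proper_scoring_rule[OF assms(2)]]
    by blast
qed

end
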